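(* Let $k\in\{1,2\}$, $\beta\in\mathbb{R}\setminus\{0\}$, $h>0$, let $\varphi^h\in\ell^2_h(\mathbb{Z})$ be real-valued and let $u^h$ be the solution of $$\frac{d}{dt}u^h_j + D_+D_0D_-u^h_j + \beta\frac{k+1}{k+2}\Big[(u^h_j)^k D_0u^h_j + D_0\big((u^h)^{k+1}\big)_j\Big] + h\,(D_+D_-D_+D_-u^h)_j=0,\quad j\in\mathbb{Z},\qquad u^h(0)=\varphi^h.$$ Then for all $t>0$, $\|u^h(t)\|_{2,h}\le\|\varphi^h\|_{2,h}$. In particular $u^h$ is a global solution.
   Context: $x_j=jh$; $\ell^2_h(\mathbb{Z})$ is the space of sequences with $\|z\|_{2,h}^2=\sum_j h|z_j|^2<\infty$. $D_+u_j=(u_{j+1}-u_j)/h$, $D_-u_j=(u_j-u_{j-1})/h$, $D_0u_j=(u_{j+1}-u_{j-1})/(2h)$; powers of sequences are componentwise. *)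

theory Defs
  imports "HOL-Analysis.Analysis"
begin

text \<open>Grid sequences are functions int => real (index j corresponds to x_j = j h).\<close>

definition l2h :: "(int \<Rightarrow> real) \<Rightarrow> bool" where
  "l2h z \<longleftrightarrow> (\<lambda>j. (z j)^2) summable_on UNIV"

definition norm2h :: "real \<Rightarrow> (int \<Rightarrow> real) \<Rightarrow> real" where
  "norm2h h z = sqrt (infsum (\<lambda>j. h * (z j)^2) UNIV)"

definition Dp :: "real \<Rightarrow> (int \<Rightarrow> real) \<Rightarrow> int \<Rightarrow> real" where
  "Dp h u j = (u (j+1) - u j) / h"

definition Dm :: "real \<Rightarrow> (int \<Rightarrow> real) \<Rightarrow> int \<Rightarrow> real" where
  "Dm h u j = (u j - u (j-1)) / h"

definition D0 :: "real \<Rightarrow> (int \<Rightarrow> real) \<Rightarrow> int \<Rightarrow> real" where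
  "D0 h u j = (u (j+1) - u (j-1)) / (2*h)"

definition Fh :: "nat \<Rightarrow> real \<Rightarrow> real \<Rightarrow> (int \<Rightarrow> real) \<Rightarrow> int \<Rightarrow> real" where
  "Fh k \<beta> h u j =
     Dp h (D0 h (Dm h u)) j
     + \<beta> * (real k + 1) / (real k + 2) * ((u j)^k * D0 h u j + D0 h (\<lambda>i. (u i)^(k+1)) j)
     + h * Dp h (Dm h (Dp h (Dm h u))) j"

definition has_l2h_deriv ::
  "real \<Rightarrow> (real \<Rightarrow> int \<Rightarrow> real) \<Rightarrow> (int \<Rightarrow> real) \<Rightarrow> real \<Rightarrow> real set \<Rightarrow> bool" where
  "has_l2h_deriv h u v t S \<longleftrightarrow> l2h v \<and>
     ((\<lambda>s. norm2h h (\<lambda>j. (u s j - u t j) / (s - t) - v j)) \<longlongrightarrow> 0) (at t within S)"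

definition is_solution ::
  "nat \<Rightarrow> real \<Rightarrow> real \<Rightarrow> (int \<Rightarrow> real) \<Rightarrow> real set \<Rightarrow> (real \<Rightarrow> int \<Rightarrow> real) \<Rightarrow> bool" where
  "is_solution k \<beta> h \<phi> I u \<longleftrightarrow> u 0 = \<phi> \<and>
     (\<forall>t\<in>I. l2h (u t) \<and> has_l2h_deriv h u (\<lambda>j. - Fh k \<beta> h (u t) j) t I)"

end

(* The scheme is an ODE u' = -F(u) in the Hilbert space l^2. Summation by parts (D_+ and -D_- are
   adjoint, D_0 is skew-adjoint) gives <u, F u> = h |D_+ D_- u|^2 >= 0: the Airy term cancels, and so
   does the nonlinearity, since <u, u^k D_0 u> = <u^(k+1), D_0 u> = - <u, D_0 (u^(k+1))>. Hence the norm
   does not increase along any solution. F is Lipschitz on bounded sets, so multiplying it by a cutoff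
   that vanishes outside the ball of radius 2R, R > |phi|, gives a globally Lipschitz field with the same
   dissipativity. Picard iteration in a Bielecki norm solves that ODE for all t >= 0, and by the energy
   estimate its solution stays in the ball of radius R, where the cutoff is inactive. *)

theory Submission
  imports Defs
begin

section \<open>Square-summable grid sequences\<close>

lemma l2h_zero: "l2h (\<lambda>_. 0)"
  by (simp add: l2h_def)

lemma l2h_add:
  assumes "l2h f" "l2h g"
  shows "l2h (\<lambda>j. f j + g j)"
proof -
  have "(\<lambda>j. 2 * (f j)^2 + 2 * (g j)^2) summable_on UNIV"
    using assms unfolding l2h_def by (intro summable_on_add summable_on_cmult_right)
  moreover have "(f j + g j)^2 \<le> 2 * (f j)^2 + 2 * (g j)^2" for j
    using zero_le_power2[of "f j - g j"] unfolding power2_diff power2_sum by linarith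
  ultimately show ?thesis
    unfolding l2h_def by (rule summable_on_comparison_test) auto
qed

lemma l2h_cmult:
  assumes "l2h f"
  shows "l2h (\<lambda>j. c * f j)"
  using summable_on_cmult_right[of _ UNIV "c^2"] assms
  by (simp add: l2h_def power_mult_distrib)

lemma l2h_diff:
  assumes "l2h f" "l2h g"
  shows "l2h (\<lambda>j. f j - g j)"
  using l2h_add[OF assms(1) l2h_cmult[OF assms(2), of "-1"]] by simp

lemma l2h_mult_summable:
  assumes "l2h f" "l2h g"
  shows "(\<lambda>j. f j * g j) summable_on UNIV"
proof -
  have "(\<lambda>j. (f j)^2 + (g j)^2) summable_on UNIV"
    using assms unfolding l2h_def by (intro summable_on_add)
  moreover have "norm (f j * g j) \<le> (f j)^2 + (g j)^2" for j
    using zero_le_power2[of "\<bar>f j\<bar> - \<bar>g j\<bar>"] mult_nonneg_nonneg[OF abs_ge_zero abs_ge_zero, of "f j" "g j"]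
    unfolding power2_diff power2_abs real_norm_def abs_mult by linarith
  ultimately have "(\<lambda>j. norm (f j * g j)) summable_on UNIV"
    by (rule summable_on_comparison_test) auto
  then show ?thesis
    using summable_on_iff_abs_summable_on_real by blast
qed

lemma l2h_square_le_infsum:
  assumes "l2h f"
  shows "(f j)^2 \<le> infsum (\<lambda>j. (f j)^2) UNIV"
  using finite_sum_le_infsum[of "\<lambda>j. (f j)^2" UNIV "{j}"] assms by (simp add: l2h_def)

lemma l2h_mult:
  assumes "l2h f" "l2h g"
  shows "l2h (\<lambda>j. f j * g j)"
proof -
  let ?C = "infsum (\<lambda>j. (f j)^2) UNIV"
  have "(\<lambda>j. ?C * (g j)^2) summable_on UNIV"
    using assms unfolding l2h_def by (intro summable_on_cmult_right)
  moreover have "(f j * g j)^2 \<le> ?C * (g j)^2" for j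
    using l2h_square_le_infsum[OF assms(1), of j] by (simp add: power_mult_distrib mult_right_mono)
  ultimately show ?thesis
    unfolding l2h_def by (rule summable_on_comparison_test) auto
qed

lemma bij_betw_add_int: "bij_betw (\<lambda>j::int. j + n) UNIV UNIV"
  by (rule bij_betwI[where g="\<lambda>j. j - n"]) auto

lemma l2h_shift:
  assumes "l2h f"
  shows "l2h (\<lambda>j. f (j + n))"
  using assms summable_on_reindex_bij_betw[OF bij_betw_add_int[of n], of "\<lambda>j. (f j)^2"]
  by (simp add: l2h_def)

lemma infsum_shift_int: "infsum (\<lambda>j. g (j + n)) UNIV = infsum g (UNIV :: int set)"
  using infsum_reindex_bij_betw[OF bij_betw_add_int[of n], of g] by simp

text \<open>The inner product of \<open>ell2\<close> carries no grid weight; \<open>norm2h h\<close> is \<open>sqrt h\<close> times its norm.\<close>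

typedef ell2 = "Collect l2h"
  using l2h_zero by blast

setup_lifting type_definition_ell2

lemma l2h_Rep_ell2 [simp]: "l2h (Rep_ell2 x)"
  using Rep_ell2 by simp

lemma Rep_ell2_Abs_ell2: "l2h z \<Longrightarrow> Rep_ell2 (Abs_ell2 z) = z"
  by (simp add: Abs_ell2_inverse)

instantiation ell2 :: real_vector
begin
lift_definition zero_ell2 :: ell2 is "\<lambda>_. 0" by (simp add: l2h_zero)
lift_definition plus_ell2 :: "ell2 \<Rightarrow> ell2 \<Rightarrow> ell2" is "\<lambda>f g j. f j + g j"
  by (simp add: l2h_add)
lift_definition uminus_ell2 :: "ell2 \<Rightarrow> ell2" is "\<lambda>f j. - f j"
  using l2h_cmult[of _ "-1"] by simp
lift_definition minus_ell2 :: "ell2 \<Rightarrow> ell2 \<Rightarrow> ell2" is "\<lambda>f g j. f j - g j"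
  by (simp add: l2h_diff)
lift_definition scaleR_ell2 :: "real \<Rightarrow> ell2 \<Rightarrow> ell2" is "\<lambda>c f j. c * f j"
  by (simp add: l2h_cmult)
instance
  by standard (transfer; auto simp: algebra_simps)+
end

lemmas Rep_ell2_ops [simp] =
  zero_ell2.rep_eq plus_ell2.rep_eq uminus_ell2.rep_eq minus_ell2.rep_eq scaleR_ell2.rep_eq

lemma ell2_eqI: "(\<And>j. Rep_ell2 x j = Rep_ell2 y j) \<Longrightarrow> x = y"
  by (metis Rep_ell2_inject ext)

instantiation ell2 :: real_inner
begin
definition inner_ell2 :: "ell2 \<Rightarrow> ell2 \<Rightarrow> real" where
  "inner_ell2 x y = infsum (\<lambda>j. Rep_ell2 x j * Rep_ell2 y j) UNIV"
definition norm_ell2 :: "ell2 \<Rightarrow> real" where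
  "norm_ell2 x = sqrt (inner x x)"
definition sgn_ell2 :: "ell2 \<Rightarrow> ell2" where
  "sgn_ell2 x = x /\<^sub>R norm x"
definition dist_ell2 :: "ell2 \<Rightarrow> ell2 \<Rightarrow> real" where
  "dist_ell2 x y = norm (x - y)"
definition uniformity_ell2 :: "(ell2 \<times> ell2) filter" where
  "uniformity_ell2 = (INF e\<in>{0 <..}. principal {(x, y). dist x y < e})"
definition open_ell2 :: "ell2 set \<Rightarrow> bool" where
  "open_ell2 U = (\<forall>x\<in>U. \<forall>\<^sub>F (x', y) in uniformity. x' = x \<longrightarrow> y \<in> U)"
instance
proof
  fix x y z :: ell2 and r :: real
  show "inner x y = inner y x"
    by (simp add: inner_ell2_def mult.commute)
  show "inner (x + y) z = inner x z + inner y z"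
    by (simp add: inner_ell2_def distrib_right infsum_add l2h_mult_summable)
  show "inner (r *\<^sub>R x) y = r * inner x y"
    by (simp add: inner_ell2_def mult.assoc infsum_cmult_right l2h_mult_summable)
  show "0 \<le> inner x x"
    by (simp add: inner_ell2_def infsum_nonneg)
  show "inner x x = 0 \<longleftrightarrow> x = 0"
  proof
    assume "inner x x = 0"
    then have "Rep_ell2 x j * Rep_ell2 x j = 0" for j
      unfolding inner_ell2_def by (intro nonneg_infsum_le_0D[of _ UNIV]) (auto simp: l2h_mult_summable)
    then show "x = 0" by (intro ell2_eqI) simp
  qed (simp add: inner_ell2_def)
qed (rule norm_ell2_def sgn_ell2_def dist_ell2_def uniformity_ell2_def open_ell2_def)+
end

lemma norm_ell2_square: "(norm x)^2 = infsum (\<lambda>j. (Rep_ell2 x j)^2) UNIV"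
  unfolding power2_norm_eq_inner inner_ell2_def by (simp add: power2_eq_square)

lemma abs_Rep_ell2_le_norm: "\<bar>Rep_ell2 x j\<bar> \<le> norm x"
  using l2h_square_le_infsum[OF l2h_Rep_ell2[of x], of j]
  using abs_le_square_iff[of "Rep_ell2 x j" "norm x"] by (simp add: norm_ell2_square)

lemma l2h_pointwise_limit:
  assumes lim: "\<And>j. (\<lambda>m. Rep_ell2 (X m) j) \<longlonglongrightarrow> y j"
    and close: "\<And>m. m \<ge> N \<Longrightarrow> dist x (X m) \<le> e"
  shows "l2h (\<lambda>j. Rep_ell2 x j - y j)"
    and "infsum (\<lambda>j. (Rep_ell2 x j - y j)^2) UNIV \<le> e^2"
proof -
  have finite_sums: "sum (\<lambda>j. (Rep_ell2 x j - y j)^2) F \<le> e^2" if "finite F" for F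
  proof (rule LIMSEQ_le_const2)
    show "(\<lambda>m. \<Sum>j\<in>F. (Rep_ell2 x j - Rep_ell2 (X m) j)^2) \<longlonglongrightarrow> (\<Sum>j\<in>F. (Rep_ell2 x j - y j)^2)"
      by (intro tendsto_intros lim)
    have "(\<Sum>j\<in>F. (Rep_ell2 x j - Rep_ell2 (X m) j)^2) \<le> e^2" if "m \<ge> N" for m
    proof -
      have "(\<Sum>j\<in>F. (Rep_ell2 x j - Rep_ell2 (X m) j)^2) \<le> (dist x (X m))^2"
        using finite_sum_le_infsum[of "\<lambda>j. (Rep_ell2 (x - X m) j)^2" UNIV F] \<open>finite F\<close>
        by (simp add: dist_norm norm_ell2_square l2h_def[symmetric] l2h_diff)
      also have "\<dots> \<le> e^2"
        using close[OF that] by (simp add: power_mono)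
      finally show ?thesis .
    qed
    then show "\<exists>M. \<forall>m\<ge>M. (\<Sum>j\<in>F. (Rep_ell2 x j - Rep_ell2 (X m) j)^2) \<le> e^2"
      by blast
  qed
  show l2h: "l2h (\<lambda>j. Rep_ell2 x j - y j)"
    unfolding l2h_def by (rule nonneg_bdd_above_summable_on) (auto intro!: bdd_aboveI2 finite_sums)
  show "infsum (\<lambda>j. (Rep_ell2 x j - y j)^2) UNIV \<le> e^2"
    using l2h unfolding l2h_def by (rule infsum_le_finite_sums) (auto intro: finite_sums)
qed

lemma Cauchy_Rep_ell2:
  assumes "Cauchy X"
  shows "Cauchy (\<lambda>n. Rep_ell2 (X n) j)"
proof (rule metric_CauchyI)
  fix e :: real
  assume "0 < e"
  then obtain M where "\<forall>m\<ge>M. \<forall>n\<ge>M. dist (X m) (X n) < e"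
    using metric_CauchyD[OF assms] by blast
  moreover have "dist (Rep_ell2 (X m) j) (Rep_ell2 (X n) j) \<le> dist (X m) (X n)" for m n
    using abs_Rep_ell2_le_norm[of "X m - X n" j] by (simp add: dist_norm dist_real_def)
  ultimately show "\<exists>M. \<forall>m\<ge>M. \<forall>n\<ge>M. dist (Rep_ell2 (X m) j) (Rep_ell2 (X n) j) < e"
    by (meson order_le_less_trans)
qed

instance ell2 :: complete_space
proof
  fix X :: "nat \<Rightarrow> ell2"
  assume X: "Cauchy X"
  define y where "y j = lim (\<lambda>n. Rep_ell2 (X n) j)" for j
  note Cauchy_Rep_ell2[OF X]
  then have y: "(\<lambda>n. Rep_ell2 (X n) j) \<longlonglongrightarrow> y j" for j
    unfolding y_def Cauchy_convergent_iff convergent_LIMSEQ_iff by blast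
  have close: "\<exists>N. \<forall>n\<ge>N. l2h (\<lambda>j. Rep_ell2 (X n) j - y j)
      \<and> infsum (\<lambda>j. (Rep_ell2 (X n) j - y j)^2) UNIV \<le> e^2" if "e > 0" for e
  proof -
    obtain N where N: "\<forall>m\<ge>N. \<forall>n\<ge>N. dist (X n) (X m) < e"
      using metric_CauchyD[OF X \<open>e > 0\<close>] by blast
    have "l2h (\<lambda>j. Rep_ell2 (X n) j - y j) \<and> infsum (\<lambda>j. (Rep_ell2 (X n) j - y j)^2) UNIV \<le> e^2"
      if "n \<ge> N" for n
      using l2h_pointwise_limit[OF y, of N "X n" e] N that by (simp add: less_imp_le)
    then show ?thesis by blast
  qed
  then obtain N where "l2h (\<lambda>j. Rep_ell2 (X N) j - y j)"
    using zero_less_one by blast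
  from l2h_diff[OF l2h_Rep_ell2[of "X N"] this] have y_l2h: "l2h y"
    by simp
  have "X \<longlonglongrightarrow> Abs_ell2 y"
  proof (rule metric_LIMSEQ_I)
    fix r :: real
    assume "0 < r"
    then obtain N where N: "\<forall>n\<ge>N. infsum (\<lambda>j. (Rep_ell2 (X n) j - y j)^2) UNIV \<le> (r/2)^2"
      using close[of "r/2"] by auto
    have "dist (X n) (Abs_ell2 y) < r" if "n \<ge> N" for n
    proof -
      have "(dist (X n) (Abs_ell2 y))^2 \<le> (r/2)^2"
        using N that by (simp add: dist_norm norm_ell2_square Rep_ell2_Abs_ell2[OF y_l2h])
      then show ?thesis
        using \<open>0 < r\<close> power2_le_imp_le[of "dist (X n) (Abs_ell2 y)" "r/2"] by simp
    qed
    then show "\<exists>N. \<forall>n\<ge>N. dist (X n) (Abs_ell2 y) < r" by blast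
  qed
  then show "convergent X" by (rule convergentI)
qed

instance ell2 :: banach ..

lift_definition ell2_mult :: "ell2 \<Rightarrow> ell2 \<Rightarrow> ell2" is "\<lambda>f g j. f j * g j"
  by (simp add: l2h_mult)

lift_definition ell2_shift :: "int \<Rightarrow> ell2 \<Rightarrow> ell2" is "\<lambda>n f j. f (j + n)"
  by (simp add: l2h_shift)

lemmas Rep_ell2_mult_shift [simp] = ell2_mult.rep_eq ell2_shift.rep_eq

lemma norm_ell2_mult_le: "norm (ell2_mult a b) \<le> norm a * norm b"
proof -
  have "(norm (ell2_mult a b))^2 = infsum (\<lambda>j. (Rep_ell2 a j)^2 * (Rep_ell2 b j)^2) UNIV"
    by (simp add: norm_ell2_square power_mult_distrib)
  also have "\<dots> \<le> infsum (\<lambda>j. (norm a)^2 * (Rep_ell2 b j)^2) UNIV"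
  proof (rule infsum_mono)
    show "(\<lambda>j. (Rep_ell2 a j)^2 * (Rep_ell2 b j)^2) summable_on UNIV"
      using l2h_Rep_ell2[of "ell2_mult a b"] by (simp add: l2h_def power_mult_distrib)
    show "(\<lambda>j. (norm a)^2 * (Rep_ell2 b j)^2) summable_on UNIV"
      using l2h_Rep_ell2[of b] unfolding l2h_def by (rule summable_on_cmult_right)
    show "(Rep_ell2 a j)^2 * (Rep_ell2 b j)^2 \<le> (norm a)^2 * (Rep_ell2 b j)^2" for j
      using power_mono[OF abs_Rep_ell2_le_norm[of a j] abs_ge_zero, of 2] by (simp add: mult_right_mono)
  qed
  also have "\<dots> = (norm a * norm b)^2"
    using l2h_Rep_ell2[of b] by (simp add: infsum_cmult_right l2h_def norm_ell2_square power_mult_distrib)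
  finally show ?thesis
    by (simp add: power2_le_iff_abs_le)
qed

lemma bounded_bilinear_ell2_mult: "bounded_bilinear ell2_mult"
proof
  show "\<exists>K. \<forall>a b. norm (ell2_mult a b) \<le> norm a * norm b * K"
    using norm_ell2_mult_le by (metis mult.right_neutral)
qed (transfer; auto simp: algebra_simps)+

lemma inner_ell2_mult: "inner a (ell2_mult b c) = inner (ell2_mult a b) c"
  by (simp add: inner_ell2_def mult.assoc)

lemma inner_ell2_shift: "inner a (ell2_shift n b) = inner (ell2_shift (-n) a) b"
  unfolding inner_ell2_def
  using infsum_shift_int[of "\<lambda>j. Rep_ell2 a (j + - n) * Rep_ell2 b j" n] by simp

lemma norm_ell2_shift [simp]: "norm (ell2_shift n a) = norm a"
proof -
  have "ell2_shift (-n) (ell2_shift n a) = a"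
    by (rule ell2_eqI) simp
  then show ?thesis
    using inner_ell2_shift[of "ell2_shift n a" n a] by (simp add: norm_eq_sqrt_inner)
qed

lemma bounded_linear_ell2_shift: "bounded_linear (ell2_shift n)"
proof
  show "\<exists>K. \<forall>x. norm (ell2_shift n x) \<le> norm x * K"
    by (metis mult.right_neutral norm_ell2_shift order_refl)
qed (transfer; auto simp: algebra_simps)+

section \<open>Difference operators and the energy identity\<close>

definition ell2_Dp :: "real \<Rightarrow> ell2 \<Rightarrow> ell2" where
  "ell2_Dp h x = (1/h) *\<^sub>R (ell2_shift 1 x - x)"

definition ell2_Dm :: "real \<Rightarrow> ell2 \<Rightarrow> ell2" where
  "ell2_Dm h x = (1/h) *\<^sub>R (x - ell2_shift (-1) x)"

definition ell2_D0 :: "real \<Rightarrow> ell2 \<Rightarrow> ell2" where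
  "ell2_D0 h x = (1/(2*h)) *\<^sub>R (ell2_shift 1 x - ell2_shift (-1) x)"

lemma Rep_ell2_Dp [simp]: "Rep_ell2 (ell2_Dp h x) = Dp h (Rep_ell2 x)"
  by (rule ext) (simp add: ell2_Dp_def Dp_def)

lemma Rep_ell2_Dm [simp]: "Rep_ell2 (ell2_Dm h x) = Dm h (Rep_ell2 x)"
  by (rule ext) (simp add: ell2_Dm_def Dm_def)

lemma Rep_ell2_D0 [simp]: "Rep_ell2 (ell2_D0 h x) = D0 h (Rep_ell2 x)"
  by (rule ext) (simp add: ell2_D0_def D0_def)

lemma inner_ell2_Dp: "inner x (ell2_Dp h y) = - inner (ell2_Dm h x) y"
  by (simp add: ell2_Dp_def ell2_Dm_def inner_diff_right inner_diff_left inner_ell2_shift algebra_simps)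

lemma inner_ell2_Dm: "inner x (ell2_Dm h y) = - inner (ell2_Dp h x) y"
  by (simp add: ell2_Dp_def ell2_Dm_def inner_diff_right inner_diff_left inner_ell2_shift algebra_simps)

lemma inner_ell2_D0: "inner x (ell2_D0 h y) = - inner (ell2_D0 h x) y"
  by (simp add: ell2_D0_def inner_diff_right inner_diff_left inner_ell2_shift algebra_simps)

lemma bounded_linear_ell2_Dp: "bounded_linear (ell2_Dp h)"
  unfolding ell2_Dp_def[abs_def]
  by (intro bounded_linear_compose[OF bounded_linear_scaleR_right] bounded_linear_sub
      bounded_linear_ell2_shift bounded_linear_ident)

lemma bounded_linear_ell2_Dm: "bounded_linear (ell2_Dm h)"
  unfolding ell2_Dm_def[abs_def]
  by (intro bounded_linear_compose[OF bounded_linear_scaleR_right] bounded_linear_sub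
      bounded_linear_ell2_shift bounded_linear_ident)

lemma bounded_linear_ell2_D0: "bounded_linear (ell2_D0 h)"
  unfolding ell2_D0_def[abs_def]
  by (intro bounded_linear_compose[OF bounded_linear_scaleR_right] bounded_linear_sub
      bounded_linear_ell2_shift)

text \<open>Powers start at exponent one because the constant sequence \<open>1\<close> is not square summable.\<close>

lift_definition ell2_power_Suc :: "ell2 \<Rightarrow> nat \<Rightarrow> ell2" is "\<lambda>f n j. f j ^ Suc n"
proof -
  fix f :: "int \<Rightarrow> real" and n :: nat
  assume "f \<in> Collect l2h"
  then have "l2h f"
    by simp
  then show "(\<lambda>j. f j ^ Suc n) \<in> Collect l2h"
    by (induction n) (simp_all add: l2h_mult)
qed

lemma ell2_power_Suc_0: "ell2_power_Suc u 0 = u"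
  by transfer simp

lemma ell2_power_Suc_Suc: "ell2_power_Suc u (Suc n) = ell2_mult u (ell2_power_Suc u n)"
  by transfer simp

definition ell2_dispersion :: "real \<Rightarrow> ell2 \<Rightarrow> ell2" where
  "ell2_dispersion h u =
     ell2_Dp h (ell2_D0 h (ell2_Dm h u)) + h *\<^sub>R ell2_Dp h (ell2_Dm h (ell2_Dp h (ell2_Dm h u)))"

definition ell2_nonlinearity :: "nat \<Rightarrow> real \<Rightarrow> ell2 \<Rightarrow> ell2" where
  "ell2_nonlinearity k h u =
     ell2_mult (ell2_power_Suc u (k - 1)) (ell2_D0 h u)
     + ell2_D0 h (ell2_mult u (ell2_power_Suc u (k - 1)))"

definition ell2_F :: "nat \<Rightarrow> real \<Rightarrow> real \<Rightarrow> ell2 \<Rightarrow> ell2" where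
  "ell2_F k \<beta> h u =
     ell2_dispersion h u + (\<beta> * (real k + 1) / (real k + 2)) *\<^sub>R ell2_nonlinearity k h u"

lemma Rep_ell2_F:
  assumes "k \<ge> 1"
  shows "Rep_ell2 (ell2_F k \<beta> h u) = Fh k \<beta> h (Rep_ell2 u)"
proof -
  have "Rep_ell2 (ell2_power_Suc u (k - 1)) = (\<lambda>j. Rep_ell2 u j ^ k)"
    using assms by (simp add: ell2_power_Suc.rep_eq del: power_Suc)
  then show ?thesis
    by (simp add: fun_eq_iff Fh_def ell2_F_def ell2_dispersion_def ell2_nonlinearity_def
        algebra_simps)
qed

lemma ell2_F_zero: "ell2_F k \<beta> h 0 = 0"
  by (rule ell2_eqI)
    (simp add: ell2_F_def ell2_dispersion_def ell2_nonlinearity_def Dp_def Dm_def D0_def ell2_power_Suc.rep_eq)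

lemma inner_ell2_dispersion: "inner u (ell2_dispersion h u) = h * (norm (ell2_Dp h (ell2_Dm h u)))^2"
proof -
  have "inner u (ell2_Dp h (ell2_D0 h (ell2_Dm h u))) = 0"
    using inner_ell2_D0[of "ell2_Dm h u" h "ell2_Dm h u"] by (simp add: inner_ell2_Dp inner_commute)
  moreover have "inner u (ell2_Dp h (ell2_Dm h (ell2_Dp h (ell2_Dm h u)))) = (norm (ell2_Dp h (ell2_Dm h u)))^2"
    by (simp add: inner_ell2_Dp inner_ell2_Dm power2_norm_eq_inner)
  ultimately show ?thesis
    by (simp add: ell2_dispersion_def inner_add_right)
qed

lemma inner_ell2_nonlinearity: "inner u (ell2_nonlinearity k h u) = 0"
  by (simp add: ell2_nonlinearity_def inner_add_right inner_ell2_mult inner_ell2_D0 inner_commute)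

lemma inner_ell2_F_nonneg: "h \<ge> 0 \<Longrightarrow> 0 \<le> inner u (ell2_F k \<beta> h u)"
  by (simp add: ell2_F_def inner_add_right inner_ell2_dispersion inner_ell2_nonlinearity)

section \<open>Lipschitz estimates\<close>

lemma lipschitz_on_bounded_image:
  assumes "L-lipschitz_on S f" and "bounded S"
  shows "bounded (f ` S)"
proof (cases "S = {}")
  case False
  then obtain a where "a \<in> S" by blast
  moreover obtain e where "\<forall>y\<in>S. dist a y \<le> e"
    using \<open>bounded S\<close> bounded_any_center by blast
  ultimately have "\<forall>y\<in>S. dist (f a) (f y) \<le> L * e"
    using lipschitz_onD[OF assms(1)] mult_left_mono[OF _ lipschitz_on_nonneg[OF assms(1)]]
    by (meson order_trans)
  then show ?thesis
    unfolding bounded_def by blast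
qed simp

lemma bounded_linear_lipschitz_on:
  assumes "bounded_linear T" and "L-lipschitz_on S f"
  shows "\<exists>C. C-lipschitz_on S (\<lambda>x. T (f x))"
proof -
  obtain K where "K-lipschitz_on (f ` S) T"
    using bounded_linear.lipschitz_boundE[OF assms(1)] by blast
  then show ?thesis
    using lipschitz_on_compose2[OF assms(2)] by blast
qed

lemma bounded_bilinear_lipschitz_on:
  fixes f :: "'c::real_normed_vector \<Rightarrow> 'a::real_normed_vector"
    and g :: "'c \<Rightarrow> 'b::real_normed_vector"
  assumes bil: "bounded_bilinear bil"
    and f: "A-lipschitz_on S f" and g: "B-lipschitz_on S g" and "bounded S"
  shows "\<exists>C. C-lipschitz_on S (\<lambda>x. bil (f x) (g x))"
proof -
  obtain Mf where Mf: "Mf > 0" "\<forall>x\<in>S. norm (f x) \<le> Mf"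
    using lipschitz_on_bounded_image[OF f \<open>bounded S\<close>] by (auto simp: bounded_pos)
  obtain Mg where Mg: "Mg > 0" "\<forall>x\<in>S. norm (g x) \<le> Mg"
    using lipschitz_on_bounded_image[OF g \<open>bounded S\<close>] by (auto simp: bounded_pos)
  obtain K where K: "K > 0" "\<And>a b. norm (bil a b) \<le> norm a * norm b * K"
    using bounded_bilinear.pos_bounded[OF bil] by blast
  have "(K * (A * Mg + Mf * B))-lipschitz_on S (\<lambda>x. bil (f x) (g x))"
  proof (rule lipschitz_onI)
    fix x y
    assume xy: "x \<in> S" "y \<in> S"
    have "bil (f x) (g x) - bil (f y) (g y) = bil (f x - f y) (g x) + bil (f y) (g x - g y)"
      by (simp add: bounded_bilinear.diff_left[OF bil] bounded_bilinear.diff_right[OF bil])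
    then have "norm (bil (f x) (g x) - bil (f y) (g y))
        \<le> norm (f x - f y) * norm (g x) * K + norm (f y) * norm (g x - g y) * K"
      using norm_triangle_le[OF add_mono[OF K(2) K(2)]] by simp
    also have "\<dots> \<le> (A * norm (x - y)) * Mg * K + Mf * (B * norm (x - y)) * K"
      using xy Mf Mg K(1) lipschitz_on_normD[OF f xy] lipschitz_on_normD[OF g xy]
        lipschitz_on_nonneg[OF f]
      by (intro add_mono mult_right_mono mult_mono) auto
    finally show "dist (bil (f x) (g x)) (bil (f y) (g y)) \<le> K * (A * Mg + Mf * B) * dist x y"
      by (simp add: dist_norm algebra_simps)
  qed (use K Mf Mg lipschitz_on_nonneg[OF f] lipschitz_on_nonneg[OF g] in simp)
  then show ?thesis ..
qed

lemma lipschitz_on_ell2_power_Suc: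
  assumes "bounded S"
  shows "\<exists>L. L-lipschitz_on S (\<lambda>u. ell2_power_Suc u n)"
proof (induction n)
  case 0
  show ?case
    using lipschitz_on_id by (auto simp: ell2_power_Suc_0)
next
  case (Suc n)
  then show ?case
    using bounded_bilinear_lipschitz_on[OF bounded_bilinear_ell2_mult lipschitz_on_id _ assms]
    by (auto simp: ell2_power_Suc_Suc)
qed

lemma bounded_linear_ell2_dispersion: "bounded_linear (ell2_dispersion h)"
  unfolding ell2_dispersion_def[abs_def]
  by (intro bounded_linear_add bounded_linear_compose[OF bounded_linear_scaleR_right]
      bounded_linear_compose[OF bounded_linear_ell2_Dp] bounded_linear_compose[OF bounded_linear_ell2_Dm]
      bounded_linear_compose[OF bounded_linear_ell2_D0] bounded_linear_ident)

lemma lipschitz_on_ell2_nonlinearity: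
  assumes "bounded S"
  shows "\<exists>L. L-lipschitz_on S (ell2_nonlinearity k h)"
proof -
  obtain Lp where pow: "Lp-lipschitz_on S (\<lambda>u. ell2_power_Suc u (k - 1))"
    using lipschitz_on_ell2_power_Suc[OF assms] by blast
  obtain L0 where D0: "L0-lipschitz_on S (ell2_D0 h)"
    using bounded_linear_lipschitz_on[OF bounded_linear_ell2_D0 lipschitz_on_id] by auto
  obtain L1 where first: "L1-lipschitz_on S (\<lambda>u. ell2_mult (ell2_power_Suc u (k - 1)) (ell2_D0 h u))"
    using bounded_bilinear_lipschitz_on[OF bounded_bilinear_ell2_mult pow D0 assms] by blast
  obtain L2 where "L2-lipschitz_on S (\<lambda>u. ell2_mult u (ell2_power_Suc u (k - 1)))"
    using bounded_bilinear_lipschitz_on[OF bounded_bilinear_ell2_mult lipschitz_on_id pow assms] by blast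
  then obtain L3 where second: "L3-lipschitz_on S (\<lambda>u. ell2_D0 h (ell2_mult u (ell2_power_Suc u (k - 1))))"
    using bounded_linear_lipschitz_on[OF bounded_linear_ell2_D0] by blast
  show ?thesis
    using lipschitz_on_add[OF first second] unfolding ell2_nonlinearity_def[abs_def] by blast
qed

lemma lipschitz_on_ell2_F:
  assumes "bounded S"
  shows "\<exists>L. L-lipschitz_on S (ell2_F k \<beta> h)"
proof -
  obtain L1 where "L1-lipschitz_on S (ell2_dispersion h)"
    using bounded_linear.lipschitz_boundE[OF bounded_linear_ell2_dispersion] by blast
  moreover obtain L2 where "L2-lipschitz_on S (ell2_nonlinearity k h)"
    using lipschitz_on_ell2_nonlinearity[OF assms] by blast
  ultimately show ?thesis
    unfolding ell2_F_def[abs_def] using lipschitz_on_add lipschitz_on_cmult by blast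
qed

definition cutoff :: "real \<Rightarrow> real \<Rightarrow> real" where
  "cutoff R r = max 0 (min 1 (2 - r / R))"

lemma cutoff_nonneg: "0 \<le> cutoff R r"
  by (simp add: cutoff_def)

lemma cutoff_eq_1: "R > 0 \<Longrightarrow> r \<le> R \<Longrightarrow> cutoff R r = 1"
  by (simp add: cutoff_def)

lemma cutoff_eq_0: "R > 0 \<Longrightarrow> 2 * R \<le> r \<Longrightarrow> cutoff R r = 0"
  by (simp add: cutoff_def field_simps)

lemma abs_clamp_diff_le: "\<bar>max 0 (min 1 x) - max 0 (min 1 y)\<bar> \<le> \<bar>x - y\<bar>" for x y :: real
  by (auto simp: max_def min_def)

lemma abs_cutoff_diff_le:
  assumes "R > 0"
  shows "\<bar>cutoff R a - cutoff R b\<bar> \<le> \<bar>a - b\<bar> / R"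
proof -
  have "\<bar>cutoff R a - cutoff R b\<bar> \<le> \<bar>(2 - a / R) - (2 - b / R)\<bar>"
    unfolding cutoff_def by (rule abs_clamp_diff_le)
  also have "\<dots> = \<bar>a - b\<bar> / R"
    using assms by (simp add: diff_divide_distrib[symmetric] abs_minus_commute)
  finally show ?thesis .
qed

lemma abs_cutoff_norm_diff_le:
  assumes "R > 0"
  shows "\<bar>cutoff R (norm u) - cutoff R (norm v)\<bar> \<le> norm (u - v) / R"
  using abs_cutoff_diff_le[OF assms, of "norm u" "norm v"] norm_triangle_ineq3[of u v] assms
  by (meson divide_right_mono less_imp_le order_trans)

lemma norm_cutoff_scaleR_diff_le:
  assumes R: "R > 0" and "norm u \<le> 2 * R" and "2 * R < norm v" and "norm (F u) \<le> B"
  shows "norm (cutoff R (norm u) *\<^sub>R F u - cutoff R (norm v) *\<^sub>R F v) \<le> (B / R) * norm (u - v)"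
proof -
  have "norm (cutoff R (norm u) *\<^sub>R F u - cutoff R (norm v) *\<^sub>R F v)
      = \<bar>cutoff R (norm u) - cutoff R (norm v)\<bar> * norm (F u)"
    using assms by (simp add: cutoff_eq_0)
  also have "\<dots> \<le> (norm (u - v) / R) * B"
    using mult_mono[OF abs_cutoff_norm_diff_le[OF R, of u v] assms(4)] R by simp
  finally show ?thesis
    by (simp add: field_simps)
qed

lemma lipschitz_cutoff:
  fixes F :: "'a::real_normed_vector \<Rightarrow> 'b::real_normed_vector"
  assumes R: "R > 0" and F: "L-lipschitz_on (cball 0 (2 * R)) F"
  shows "\<exists>M. M-lipschitz_on UNIV (\<lambda>u. cutoff R (norm u) *\<^sub>R F u)"
proof -
  let ?B = "cball (0::'a) (2 * R)"
  let ?G = "\<lambda>u. cutoff R (norm u) *\<^sub>R F u"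
  have "(1 / R)-lipschitz_on ?B (\<lambda>u. cutoff R (norm u))"
    using R abs_cutoff_norm_diff_le[OF R] by (intro lipschitz_onI) (auto simp: dist_norm)
  then obtain C where C: "C-lipschitz_on ?B ?G"
    using bounded_bilinear_lipschitz_on[OF bounded_bilinear_scaleR _ F] by blast
  obtain B where B: "B > 0" "\<forall>u\<in>?B. norm (F u) \<le> B"
    using lipschitz_on_bounded_image[OF F bounded_cball] by (auto simp: bounded_pos)
  have escape: "norm (?G u - ?G v) \<le> (B / R) * norm (u - v)" if "u \<in> ?B" "v \<notin> ?B" for u v
    using norm_cutoff_scaleR_diff_le[OF R, of u v F B] that B(2) by simp
  have "(max C (B / R))-lipschitz_on UNIV ?G"
  proof (rule lipschitz_onI)
    fix u v :: 'a
    have "norm (?G u - ?G v) \<le> max C (B / R) * norm (u - v)"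
    proof (cases "u \<in> ?B"; cases "v \<in> ?B")
      assume "u \<in> ?B" "v \<in> ?B"
      then show ?thesis
        by (rule order_trans[OF lipschitz_on_normD[OF C] mult_right_mono[OF max.cobounded1 norm_ge_zero]])
    next
      assume "u \<in> ?B" "v \<notin> ?B"
      then show ?thesis
        by (rule order_trans[OF escape mult_right_mono[OF max.cobounded2 norm_ge_zero]])
    next
      assume "u \<notin> ?B" "v \<in> ?B"
      have "norm (?G v - ?G u) \<le> max C (B / R) * norm (v - u)"
        by (rule order_trans[OF escape[OF \<open>v \<in> ?B\<close> \<open>u \<notin> ?B\<close>]
              mult_right_mono[OF max.cobounded2 norm_ge_zero]])
      then show ?thesis
        by (simp add: norm_minus_commute)
    next
      assume "u \<notin> ?B" "v \<notin> ?B"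
      then show ?thesis
        using R B by (simp add: cutoff_eq_0 max.coboundedI2)
    qed
    then show "dist (?G u) (?G v) \<le> max C (B / R) * dist u v"
      by (simp add: dist_norm)
  qed (use lipschitz_on_nonneg[OF C] in simp)
  then show ?thesis ..
qed

section \<open>Global solutions of globally Lipschitz ODEs\<close>

lemma continuous_on_integral_max:
  fixes k :: "real \<Rightarrow> 'a::banach"
  assumes k: "continuous_on UNIV k"
  shows "continuous_on UNIV (\<lambda>t. integral {0..max 0 t} k)"
  unfolding continuous_on_eq_continuous_at[OF open_UNIV]
proof (intro ballI)
  fix x :: real
  define b where "b = \<bar>x\<bar> + 1"
  have J: "continuous_on {0..b} (\<lambda>t. integral {0..t} k)"
    by (intro indefinite_integral_continuous_1 integrable_continuous_real continuous_on_subset[OF k]) auto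
  have c: "continuous_on UNIV (\<lambda>t. min b (max 0 t))" by (intro continuous_intros)
  have "continuous_on UNIV (\<lambda>t. integral {0..min b (max 0 t)} k)"
    by (rule continuous_on_compose2[OF J c]) (auto simp: b_def)
  then have "continuous (at x within UNIV) (\<lambda>t. integral {0..min b (max 0 t)} k)"
    using continuous_on_eq_continuous_at[OF open_UNIV] by auto
  then show "isCont (\<lambda>t. integral {0..max 0 t} k) x"
  proof (rule continuous_transform_within[where \<delta>=1, simplified])
    fix x' :: real assume "dist x' x < 1"
    then have "max 0 x' \<le> b" unfolding b_def dist_real_def by auto
    then show "integral {0..min b (max 0 x')} k = integral {0..max 0 x'} k" by (simp add: min_absorb2)
  qed simp
qed

lemma exp_weighted_integral_bound:
  fixes k :: "real \<Rightarrow> 'a::banach"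
  assumes M: "M > 0" and k: "continuous_on UNIV k" and B: "0 \<le> B"
    and kb: "\<And>s. 0 \<le> s \<Longrightarrow> norm (k s) \<le> M * exp (2 * M * s) * B" and t: "0 \<le> t"
  shows "exp (- (2 * M) * t) * norm (integral {0..t} k) \<le> B / 2"
proof -
  have int: "((\<lambda>s. M * exp (2 * M * s) * B) has_integral (B/2 * exp (2 * M * t) - B/2 * exp (2 * M * 0))) {0..t}"
  proof (rule fundamental_theorem_of_calculus[OF t])
    fix x assume "x \<in> {0..t}"
    have "((\<lambda>s. B/2 * exp (2 * M * s)) has_real_derivative (B/2 * (exp (2 * M * x) * (2 * M)))) (at x within {0..t})"
      by (auto intro!: derivative_eq_intros simp: algebra_simps)
    then show "((\<lambda>s. B/2 * exp (2 * M * s)) has_vector_derivative (M * exp (2 * M * x) * B)) (at x within {0..t})"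
      by (simp add: has_real_derivative_iff_has_vector_derivative[symmetric] algebra_simps)
  qed
  have "norm (integral {0..t} k) \<le> integral {0..t} (\<lambda>s. M * exp (2 * M * s) * B)"
    by (rule integral_norm_bound_integral)
      (use int kb in \<open>auto intro: integrable_continuous_real continuous_on_subset[OF k]\<close>)
  also have "\<dots> = B/2 * exp (2 * M * t) - B/2" by (simp only: integral_unique[OF int]) simp
  finally have "exp (- (2 * M) * t) * norm (integral {0..t} k) \<le> exp (- (2 * M) * t) * (B/2 * exp (2 * M * t) - B/2)"
    by (rule mult_left_mono) simp
  also have "\<dots> = B/2 - B/2 * exp (- (2 * M) * t)"
    by (simp add: algebra_simps exp_add[symmetric])
  also have "\<dots> \<le> B/2" using B by simp
  finally show ?thesis .
qed

lemma integral_equation_has_vector_derivative: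
  fixes G :: "'a::banach \<Rightarrow> 'a"
  assumes G: "continuous_on UNIV G" and U: "continuous_on UNIV U"
    and eq: "\<And>t. 0 \<le> t \<Longrightarrow> U t = x0 - integral {0..t} (\<lambda>s. G (U s))" and t: "0 \<le> t"
  shows "(U has_vector_derivative - G (U t)) (at t within {0..})"
proof -
  have GU: "continuous_on UNIV (\<lambda>s. G (U s))"
    by (rule continuous_on_compose2[OF G U]) auto
  have "((\<lambda>s. integral {0..s} (\<lambda>s. G (U s))) has_vector_derivative G (U t)) (at t within {0..t+1})"
    by (rule integral_has_vector_derivative) (use t in \<open>auto intro: continuous_on_subset[OF GU]\<close>)
  moreover have "at t within {0..t+1} = at t within {0..}"
    by (rule at_within_nhd[where S="{t - 1<..<t + 1}"]) auto
  ultimately have d: "((\<lambda>s. x0 - integral {0..s} (\<lambda>s. G (U s))) has_vector_derivative 0 - G (U t))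
      (at t within {0..})"
    by (intro has_vector_derivative_diff has_vector_derivative_const) simp
  show ?thesis
    by (rule has_vector_derivative_transform[of t "{0..}" U, OF _ _ d[simplified]]) (use t eq in auto)
qed

definition weighted_picard :: "real \<Rightarrow> ('a::banach \<Rightarrow> 'a) \<Rightarrow> 'a \<Rightarrow> (real \<Rightarrow>\<^sub>C 'a) \<Rightarrow> real \<Rightarrow> 'a" where
  "weighted_picard M G x0 w t = exp (- (2 * M) * max 0 t) *\<^sub>R
     (x0 - integral {0..max 0 t} (\<lambda>s. G (exp (2 * M * s) *\<^sub>R apply_bcontfun w s)))"

lemma continuous_on_weighted_picard:
  assumes "continuous_on UNIV G"
  shows "continuous_on UNIV (weighted_picard M G x0 w)"
proof -
  have "continuous_on UNIV (\<lambda>s. G (exp (2 * M * s) *\<^sub>R apply_bcontfun w s))"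
    by (rule continuous_on_compose2[OF assms]) (auto intro!: continuous_intros)
  then show ?thesis
    unfolding weighted_picard_def[abs_def] by (intro continuous_intros continuous_on_integral_max)
qed

lemma norm_weighted_picard_le:
  assumes M: "M > 0" and G: "M-lipschitz_on UNIV G" and G0: "G 0 = 0"
  shows "norm (weighted_picard M G x0 w t) \<le> norm x0 + norm w / 2"
proof -
  define t' where "t' = max 0 t"
  define g where "g s = G (exp (2 * M * s) *\<^sub>R apply_bcontfun w s)" for s
  have t': "0 \<le> t'" "exp (- (2 * M) * t') \<le> 1"
    using M by (simp_all add: t'_def)
  have g: "continuous_on UNIV g"
    unfolding g_def by (rule continuous_on_compose2[OF lipschitz_on_continuous_on[OF G]])
      (auto intro!: continuous_intros)
  have "norm (g s) \<le> M * exp (2 * M * s) * norm w" for s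
  proof -
    have "norm (g s) \<le> M * (exp (2 * M * s) * norm (apply_bcontfun w s))"
      using lipschitz_on_normD[OF G, of "exp (2 * M * s) *\<^sub>R apply_bcontfun w s" 0]
      by (simp add: g_def G0)
    also have "\<dots> \<le> M * (exp (2 * M * s) * norm w)"
      using M by (intro mult_left_mono norm_bounded) auto
    finally show ?thesis
      by (simp add: mult.assoc)
  qed
  then have "exp (- (2 * M) * t') * norm (integral {0..t'} g) \<le> norm w / 2"
    by (rule exp_weighted_integral_bound[OF M g norm_ge_zero _ t'(1)])
  moreover have "norm (weighted_picard M G x0 w t)
      \<le> exp (- (2 * M) * t') * norm x0 + exp (- (2 * M) * t') * norm (integral {0..t'} g)"
    unfolding weighted_picard_def t'_def[symmetric] g_def[symmetric]
    by (simp add: distrib_left[symmetric] mult_left_mono norm_triangle_ineq4)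
  ultimately show ?thesis
    using mult_right_mono[OF t'(2) norm_ge_zero[of x0]] by simp
qed

lemma dist_weighted_picard_le:
  assumes M: "M > 0" and G: "M-lipschitz_on UNIV G"
  shows "dist (weighted_picard M G x0 w1 t) (weighted_picard M G x0 w2 t) \<le> dist w1 w2 / 2"
proof -
  define t' where "t' = max 0 t"
  define g where "g w s = G (exp (2 * M * s) *\<^sub>R apply_bcontfun w s)" for w s
  have t': "0 \<le> t'"
    by (simp add: t'_def)
  have g: "continuous_on UNIV (g w)" for w
    unfolding g_def by (rule continuous_on_compose2[OF lipschitz_on_continuous_on[OF G]])
      (auto intro!: continuous_intros)
  have integrable: "g w integrable_on {0..t'}" for w
    by (intro integrable_continuous_real continuous_on_subset[OF g]) auto
  have "dist (weighted_picard M G x0 w1 t) (weighted_picard M G x0 w2 t)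
      = exp (- (2 * M) * t') * norm (integral {0..t'} (\<lambda>s. g w1 s - g w2 s))"
    unfolding weighted_picard_def t'_def[symmetric] g_def[symmetric] dist_norm
      Henstock_Kurzweil_Integration.integral_diff[OF integrable integrable]
    by (simp add: algebra_simps norm_minus_commute flip: scaleR_diff_right)
  also have "\<dots> \<le> dist w1 w2 / 2"
  proof (rule exp_weighted_integral_bound[OF M _ zero_le_dist _ t'])
    show "continuous_on UNIV (\<lambda>s. g w1 s - g w2 s)"
      by (intro continuous_intros g)
    fix s :: real
    have "norm (g w1 s - g w2 s) \<le> M * (exp (2 * M * s) * dist (apply_bcontfun w1 s) (apply_bcontfun w2 s))"
      using lipschitz_on_normD[OF G, of "exp (2 * M * s) *\<^sub>R apply_bcontfun w1 s"
          "exp (2 * M * s) *\<^sub>R apply_bcontfun w2 s"]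
      by (simp add: g_def dist_norm flip: scaleR_diff_right)
    also have "\<dots> \<le> M * (exp (2 * M * s) * dist w1 w2)"
      using M by (intro mult_left_mono dist_bounded) auto
    finally show "norm (g w1 s - g w2 s) \<le> M * exp (2 * M * s) * dist w1 w2"
      by (simp add: mult.assoc)
  qed
  finally show ?thesis .
qed

lemma lipschitz_integral_equation_solution:
  fixes G :: "'a::banach \<Rightarrow> 'a" and x0 :: 'a
  assumes G: "L-lipschitz_on UNIV G" and G0: "G 0 = 0"
  shows "\<exists>U. continuous_on UNIV U \<and> (\<forall>t::real\<ge>0. U t = x0 - integral {0..t} (\<lambda>s. G (U s)))"
proof -
  define M where "M = L + 1"
  have M: "M > 0" and G': "M-lipschitz_on UNIV G"
    using lipschitz_on_nonneg[OF G] lipschitz_on_mono[OF G] by (simp_all add: M_def)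
  \<comment> \<open>Bielecki's trick: in the variable \<open>exp (- 2 M t) U t\<close> the Picard map is a
    contraction of the bounded continuous functions.\<close>
  define Phi where "Phi w = Bcontfun (weighted_picard M G x0 w)" for w
  have Phi: "apply_bcontfun (Phi w) = weighted_picard M G x0 w" for w
    unfolding Phi_def
    using bcontfun_normI[OF continuous_on_weighted_picard[OF lipschitz_on_continuous_on[OF G]]
        norm_weighted_picard_le[OF M G' G0]]
    by (simp add: Bcontfun_inverse)
  have "dist (Phi w1) (Phi w2) \<le> (1/2) * dist w1 w2" for w1 w2
  proof (rule dist_bound)
    show "dist (apply_bcontfun (Phi w1) t) (apply_bcontfun (Phi w2) t) \<le> 1/2 * dist w1 w2" for t
      using dist_weighted_picard_le[OF M G', of x0 w1 t w2] by (simp only: Phi)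
  qed
  then obtain w where w: "Phi w = w"
    using banach_fix_type[of "1/2" Phi] by auto
  define U where "U t = exp (2 * M * t) *\<^sub>R apply_bcontfun w t" for t
  have "U t = x0 - integral {0..t} (\<lambda>s. G (U s))" if "0 \<le> t" for t
  proof -
    have "apply_bcontfun w t = weighted_picard M G x0 w t"
      by (metis Phi w)
    also have "\<dots> = exp (- (2 * M) * t) *\<^sub>R (x0 - integral {0..t} (\<lambda>s. G (U s)))"
      using that by (simp add: weighted_picard_def U_def)
    finally have "U t = (exp (2 * M * t) * exp (- (2 * M) * t)) *\<^sub>R (x0 - integral {0..t} (\<lambda>s. G (U s)))"
      by (simp add: U_def)
    then show ?thesis
      by (simp flip: exp_add)
  qed
  moreover have "continuous_on UNIV U"
    unfolding U_def by (intro continuous_intros) auto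
  ultimately show ?thesis by blast
qed

lemma lipschitz_ode_global_solution:
  fixes G :: "'a::banach \<Rightarrow> 'a" and x0 :: 'a
  assumes "L-lipschitz_on UNIV G" and "G 0 = 0"
  shows "\<exists>U. U 0 = x0 \<and> (\<forall>t\<ge>0. (U has_vector_derivative - G (U t)) (at t within {0..}))"
proof -
  obtain U where U: "continuous_on UNIV U" "\<forall>t::real\<ge>0. U t = x0 - integral {0..t} (\<lambda>s. G (U s))"
    using lipschitz_integral_equation_solution[OF assms] by blast
  then have "U 0 = x0"
    using U(2)[rule_format, of 0] by simp
  moreover have "(U has_vector_derivative - G (U t)) (at t within {0..})" if "0 \<le> t" for t
    using integral_equation_has_vector_derivative[OF lipschitz_on_continuous_on[OF assms(1)] U(1)] U(2) that
    by blast
  ultimately show ?thesis by blast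
qed

lemma norm_le_of_dissipative:
  fixes U :: "real \<Rightarrow> 'a::real_inner"
  assumes "0 \<le> t"
    and deriv: "\<And>s. s \<in> {0..t} \<Longrightarrow> (U has_vector_derivative - G (U s)) (at s within {0..t})"
    and dissipative: "\<And>s. s \<in> {0..t} \<Longrightarrow> 0 \<le> inner (U s) (G (U s))"
  shows "norm (U t) \<le> norm (U 0)"
proof -
  have square_deriv: "((\<lambda>s. inner (U s) (U s)) has_derivative
      (\<lambda>x. inner (U s) (x *\<^sub>R - G (U s)) + inner (x *\<^sub>R - G (U s)) (U s))) (at s within {0..t})"
    if "0 \<le> s" "s \<le> t" for s
    using deriv[of s] that unfolding has_vector_derivative_def by (intro has_derivative_inner) auto
  obtain s where s: "s \<in> {0..t}" and mvt: "inner (U t) (U t) - inner (U 0) (U 0) =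
      inner (U s) ((t - 0) *\<^sub>R - G (U s)) + inner ((t - 0) *\<^sub>R - G (U s)) (U s)"
    using mvt_very_simple[OF \<open>0 \<le> t\<close> square_deriv] by blast
  have "inner (U t) (U t) - inner (U 0) (U 0) = - 2 * t * inner (U s) (G (U s))"
    using mvt by (simp add: inner_commute)
  also have "\<dots> \<le> 0"
    using dissipative[OF s] \<open>0 \<le> t\<close> by (simp add: mult_nonneg_nonneg)
  finally show ?thesis
    by (simp add: norm_eq_sqrt_inner)
qed

lemma norm2h_eq_norm_ell2:
  assumes "h > 0" and "l2h z"
  shows "norm2h h z = sqrt h * norm (Abs_ell2 z)"
proof -
  have "infsum (\<lambda>j. h * (z j)^2) UNIV = h * (norm (Abs_ell2 z))^2"
    using assms by (simp add: infsum_cmult_right l2h_def norm_ell2_square Rep_ell2_Abs_ell2)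
  then show ?thesis
    unfolding norm2h_def using assms by (simp add: real_sqrt_mult)
qed

lemma norm2h_Rep_ell2: "h > 0 \<Longrightarrow> norm2h h (Rep_ell2 x) = sqrt h * norm x"
  using norm2h_eq_norm_ell2[OF _ l2h_Rep_ell2, of h x] by (simp add: Rep_ell2_inverse)

lemma has_l2h_deriv_iff_has_vector_derivative:
  assumes h: "h > 0" and u: "\<forall>s\<in>S. l2h (u s)" and t: "t \<in> S" and v: "l2h v"
  shows "has_l2h_deriv h u v t S \<longleftrightarrow>
    ((\<lambda>s. Abs_ell2 (u s)) has_vector_derivative Abs_ell2 v) (at t within S)"
proof -
  define U where "U s = Abs_ell2 (u s)" for s
  define Q where "Q s = norm ((U s - U t) - (s - t) *\<^sub>R Abs_ell2 v) / norm (s - t)" for s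
  have "norm2h h (\<lambda>j. (u s j - u t j) / (s - t) - v j) = sqrt h * Q s" if "s \<in> S" "s \<noteq> t" for s
  proof -
    let ?W = "(1 / (s - t)) *\<^sub>R (U s - U t) - Abs_ell2 v"
    have "Rep_ell2 ?W = (\<lambda>j. (u s j - u t j) / (s - t) - v j)"
      using u t v that by (simp add: U_def Rep_ell2_Abs_ell2 fun_eq_iff divide_inverse algebra_simps)
    moreover have "(U s - U t) - (s - t) *\<^sub>R Abs_ell2 v = (s - t) *\<^sub>R ?W"
      using that by (simp add: algebra_simps)
    ultimately show ?thesis
      using norm2h_Rep_ell2[OF h, of ?W] that by (simp add: Q_def)
  qed
  then have "\<forall>\<^sub>F s in at t within S. norm2h h (\<lambda>j. (u s j - u t j) / (s - t) - v j) = sqrt h * Q s"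
    by (auto simp: eventually_at_filter)
  then have "has_l2h_deriv h u v t S \<longleftrightarrow> ((\<lambda>s. sqrt h * Q s) \<longlongrightarrow> 0) (at t within S)"
    unfolding has_l2h_deriv_def using v tendsto_cong by simp
  also have "\<dots> \<longleftrightarrow> (Q \<longlongrightarrow> 0) (at t within S)"
    using tendsto_mult_left_iff[of "sqrt h" Q 0] h by simp
  also have "\<dots> \<longleftrightarrow> (U has_vector_derivative Abs_ell2 v) (at t within S)"
    unfolding has_vector_derivative_def has_derivative_iff_norm Q_def
    by (simp add: bounded_linear_scaleR_left)
  finally show ?thesis
    unfolding U_def .
qed

lemma is_solution_iff_ell2_ode:
  assumes "k \<ge> 1" and "h > 0"
  shows "is_solution k \<beta> h \<phi> I u \<longleftrightarrow> u 0 = \<phi> \<and> (\<forall>t\<in>I. l2h (u t)) \<and>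
    (\<forall>t\<in>I. ((\<lambda>s. Abs_ell2 (u s)) has_vector_derivative - ell2_F k \<beta> h (Abs_ell2 (u t))) (at t within I))"
    (is "_ \<longleftrightarrow> ?ode")
proof -
  have deriv_iff: "has_l2h_deriv h u (\<lambda>j. - Fh k \<beta> h (u t) j) t I \<longleftrightarrow>
      ((\<lambda>s. Abs_ell2 (u s)) has_vector_derivative - ell2_F k \<beta> h (Abs_ell2 (u t))) (at t within I)"
    if "\<forall>s\<in>I. l2h (u s)" "t \<in> I" for t
  proof -
    have "(\<lambda>j. - Fh k \<beta> h (u t) j) = Rep_ell2 (- ell2_F k \<beta> h (Abs_ell2 (u t)))"
      using that by (simp add: Rep_ell2_F[OF assms(1)] Rep_ell2_Abs_ell2)
    then show ?thesis
      by (simp only: has_l2h_deriv_iff_has_vector_derivative[OF assms(2) that l2h_Rep_ell2]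
          Rep_ell2_inverse)
  qed
  have "is_solution k \<beta> h \<phi> I u \<longleftrightarrow> u 0 = \<phi> \<and> (\<forall>t\<in>I. l2h (u t)) \<and>
      (\<forall>t\<in>I. has_l2h_deriv h u (\<lambda>j. - Fh k \<beta> h (u t) j) t I)"
    unfolding is_solution_def by auto
  also have "\<dots> \<longleftrightarrow> ?ode"
  proof (intro conj_cong refl)
    assume "\<forall>t\<in>I. l2h (u t)"
    then show "(\<forall>t\<in>I. has_l2h_deriv h u (\<lambda>j. - Fh k \<beta> h (u t) j) t I) \<longleftrightarrow>
        (\<forall>t\<in>I. ((\<lambda>s. Abs_ell2 (u s)) has_vector_derivative - ell2_F k \<beta> h (Abs_ell2 (u t))) (at t within I))"
      using deriv_iff by simp
  qed
  finally show ?thesis .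
qed

lemma is_solution_norm2h_le:
  assumes "k \<ge> 1" and "h > 0" and sol: "is_solution k \<beta> h \<phi> I u"
    and "0 \<le> t" and "{0..t} \<subseteq> I"
  shows "norm2h h (u t) \<le> norm2h h \<phi>"
proof -
  define U where "U s = Abs_ell2 (u s)" for s
  have u0: "u 0 = \<phi>" and l2h: "\<forall>s\<in>I. l2h (u s)"
    and deriv: "\<forall>s\<in>I. (U has_vector_derivative - ell2_F k \<beta> h (U s)) (at s within I)"
    using sol unfolding is_solution_iff_ell2_ode[OF assms(1,2)] U_def by auto
  have "norm (U t) \<le> norm (U 0)"
  proof (rule norm_le_of_dissipative[OF \<open>0 \<le> t\<close>])
    show "(U has_vector_derivative - ell2_F k \<beta> h (U s)) (at s within {0..t})" if "s \<in> {0..t}" for s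
      using deriv that \<open>{0..t} \<subseteq> I\<close> by (blast intro: has_vector_derivative_within_subset)
    show "0 \<le> inner (U s) (ell2_F k \<beta> h (U s))" for s
      using \<open>h > 0\<close> by (simp add: inner_ell2_F_nonneg)
  qed
  moreover have "l2h (u t)" "l2h \<phi>"
    using l2h u0 assms(4,5) by auto
  ultimately show ?thesis
    using u0 \<open>h > 0\<close> by (simp add: U_def norm2h_eq_norm_ell2)
qed

lemma is_solution_global_exists:
  assumes "k \<ge> 1" and "h > 0" and "l2h \<phi>"
  shows "\<exists>u. is_solution k \<beta> h \<phi> {0..} u"
proof -
  define R where "R = norm (Abs_ell2 \<phi>) + 1"
  define G where "G u = cutoff R (norm u) *\<^sub>R ell2_F k \<beta> h u" for u
  have R: "R > 0"
    by (simp add: R_def add_nonneg_pos)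
  obtain L where "L-lipschitz_on (cball 0 (2 * R)) (ell2_F k \<beta> h)"
    using lipschitz_on_ell2_F[OF bounded_cball] by blast
  then obtain M where "M-lipschitz_on UNIV G"
    unfolding G_def[abs_def] using lipschitz_cutoff[OF R] by blast
  moreover have "G 0 = 0"
    by (simp add: G_def ell2_F_zero)
  ultimately obtain U where U0: "U 0 = Abs_ell2 \<phi>"
    and dU: "\<forall>t\<ge>0. (U has_vector_derivative - G (U t)) (at t within {0..})"
    using lipschitz_ode_global_solution by blast
  have energy: "norm (U t) \<le> norm (U 0)" if "0 \<le> t" for t
  proof (rule norm_le_of_dissipative[OF that])
    show "(U has_vector_derivative - G (U s)) (at s within {0..t})" if "s \<in> {0..t}" for s
      using dU that by (auto intro: has_vector_derivative_within_subset)
    show "0 \<le> inner (U s) (G (U s))" for s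
      using \<open>h > 0\<close> by (simp add: G_def cutoff_nonneg inner_ell2_F_nonneg)
  qed
  have "G (U t) = ell2_F k \<beta> h (U t)" if "0 \<le> t" for t
  proof -
    have "norm (U t) \<le> R"
      using energy[OF that] U0 by (simp add: R_def)
    then show ?thesis
      using R by (simp add: G_def cutoff_eq_1)
  qed
  then have "is_solution k \<beta> h \<phi> {0..} (\<lambda>t. Rep_ell2 (U t))"
    using dU U0 \<open>l2h \<phi>\<close>
    by (simp add: is_solution_iff_ell2_ode[OF assms(1,2)] Rep_ell2_inverse Rep_ell2_Abs_ell2)
  then show ?thesis
    by blast
qed

theorem lemma3p5:
  fixes k :: nat and \<beta> h :: real and \<phi> :: "int \<Rightarrow> real"
  assumes "k \<in> {1,2}" and "\<beta> \<noteq> 0" and "h > 0" and "l2h \<phi>"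
  shows "(\<forall>T u. T > 0 \<longrightarrow> is_solution k \<beta> h \<phi> {0..<T} u \<longrightarrow>
            (\<forall>t\<in>{0<..<T}. norm2h h (u t) \<le> norm2h h \<phi>))
       \<and> (\<exists>u. is_solution k \<beta> h \<phi> {0..} u \<and>
            (\<forall>t>0. norm2h h (u t) \<le> norm2h h \<phi>))"
proof -
  have k: "k \<ge> 1"
    using assms(1) by auto
  have "norm2h h (u t) \<le> norm2h h \<phi>"
    if "is_solution k \<beta> h \<phi> {0..<T} u" "t \<in> {0<..<T}" for T u t
  proof -
    have "{0..t} \<subseteq> {0..<T}"
      using that(2) by auto
    then show ?thesis
      using is_solution_norm2h_le[OF k \<open>h > 0\<close> that(1)] that(2) by simp
  qed
  moreover obtain u where "is_solution k \<beta> h \<phi> {0..} u"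
    using is_solution_global_exists[OF k \<open>h > 0\<close> \<open>l2h \<phi>\<close>] by blast
  moreover have "norm2h h (u t) \<le> norm2h h \<phi>" if "t > 0" for t
    using is_solution_norm2h_le[OF k \<open>h > 0\<close> \<open>is_solution k \<beta> h \<phi> {0..} u\<close>] that by auto
  ultimately show ?thesis
    by blast
qed

end
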